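(* Let $\Lambda$ be a basic finite dimensional algebra over an algebraically closed field and let $\rho,\rho':(\mathfrak{S}_{n+1},\le)\to\operatorname{s\tau-tilt}\Lambda$ be poset isomorphisms. If $\rho(s_i)=\rho'(s_i)$ for every $i\in\{1,\dots,n\}$, then $\rho=\rho'$.
   Context: $s_i=(i,i+1)$; left weak order: $w\le w'$ iff $w'=s_{i_k}\cdots s_{i_1}w$ with $\ell(w')=\ell(w)+k$, $\ell$ the Coxeter length. $\operatorname{s\tau-tilt}\Lambda$: isoclasses of basic support $\tau$-tilting right $\Lambda$-modules ordered by $M\ge M'$ iff $\operatorname{Fac}M\supseteq\operatorname{Fac}M'$. *)

theory Defs
  imports "HOL-Combinatorics.Combinatorics"
begin

definition Sym :: "nat \<Rightarrow> (nat \<Rightarrow> nat) set" where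
  "Sym n = {w. w permutes {1..Suc n}}"

definition sref :: "nat \<Rightarrow> nat \<Rightarrow> nat" where
  "sref i = transpose i (Suc i)"

fun wprod :: "nat list \<Rightarrow> nat \<Rightarrow> nat" where
  "wprod [] = id"
| "wprod (i # is) = sref i \<circ> wprod is"

definition coxeter_length :: "nat \<Rightarrow> (nat \<Rightarrow> nat) \<Rightarrow> nat" where
  "coxeter_length n w =
     (LEAST k. \<exists>is. set is \<subseteq> {1..n} \<and> length is = k \<and> wprod is = w)"

definition left_weak :: "nat \<Rightarrow> (nat \<Rightarrow> nat) \<Rightarrow> (nat \<Rightarrow> nat) \<Rightarrow> bool" where
  "left_weak n w w' \<longleftrightarrow>
     (\<exists>is. set is \<subseteq> {1..n} \<and> w' = wprod is \<circ> w \<and>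
           coxeter_length n w' = coxeter_length n w + length is)"

definition partial_order_on' :: "'b set \<Rightarrow> ('b \<Rightarrow> 'b \<Rightarrow> bool) \<Rightarrow> bool" where
  "partial_order_on' P le \<longleftrightarrow>
     (\<forall>x\<in>P. le x x) \<and>
     (\<forall>x\<in>P. \<forall>y\<in>P. le x y \<and> le y x \<longrightarrow> x = y) \<and>
     (\<forall>x\<in>P. \<forall>y\<in>P. \<forall>z\<in>P. le x y \<and> le y z \<longrightarrow> le x z)"

definition weak_order_iso :: "nat \<Rightarrow> 'b set \<Rightarrow> ('b \<Rightarrow> 'b \<Rightarrow> bool) \<Rightarrow> ((nat \<Rightarrow> nat) \<Rightarrow> 'b) \<Rightarrow> bool" where
  "weak_order_iso n P le \<rho> \<longleftrightarrow>
     bij_betw \<rho> (Sym n) P \<and>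
     (\<forall>w\<in>Sym n. \<forall>w'\<in>Sym n. left_weak n w w' \<longleftrightarrow> le (\<rho> w) (\<rho> w'))"

end

theory Submission
  imports Defs
begin

text \<open>
  Identify a permutation with its set of inversions. Inversion sets are exactly the biclosed sets
  of pairs \<open>i < j\<close> in \<open>{1..n+1}\<close> (transitive, with transitive complement), and the left
  weak order becomes inclusion. For two isomorphisms \<open>\<rho>, \<rho>'\<close>, the map \<open>\<rho>'\<^sup>-\<^sup>1 \<circ> \<rho>\<close> is
  thus an automorphism of the inclusion order on biclosed sets fixing the singletons
  \<open>{(i, i+1)}\<close>, and such an automorphism is the identity. This is shown by induction on the
  length of the interval: the automorphism fixes the set of all pairs of each subinterval,
  hence restricts to the biclosed sets of that subinterval, so by induction \<open>\<Phi> X\<close> and \<open>X\<close>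
  can differ only in the outermost pair. Then they are comparable, and an automorphism of a
  finite poset fixes every element comparable with its image.
\<close>

section \<open>Order isomorphisms\<close>

definition order_iso_betw ::
    "('a \<Rightarrow> 'b) \<Rightarrow> 'a set \<Rightarrow> ('a \<Rightarrow> 'a \<Rightarrow> bool) \<Rightarrow> 'b set \<Rightarrow> ('b \<Rightarrow> 'b \<Rightarrow> bool) \<Rightarrow> bool" where
  "order_iso_betw f A le\<^sub>A B le\<^sub>B \<longleftrightarrow>
     bij_betw f A B \<and> (\<forall>x\<in>A. \<forall>y\<in>A. le\<^sub>A x y \<longleftrightarrow> le\<^sub>B (f x) (f y))"

lemma order_iso_betw_comp:
  "order_iso_betw f A le\<^sub>A B le\<^sub>B \<Longrightarrow> order_iso_betw g B le\<^sub>B C le\<^sub>C \<Longrightarrow>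
    order_iso_betw (g \<circ> f) A le\<^sub>A C le\<^sub>C"
  unfolding order_iso_betw_def by (auto intro: bij_betw_trans dest: bij_betwE)

lemma order_iso_betw_inv_into:
  assumes "order_iso_betw f A le\<^sub>A B le\<^sub>B"
  shows "order_iso_betw (inv_into A f) B le\<^sub>B A le\<^sub>A"
proof -
  have f: "bij_betw f A B" and le: "\<forall>x\<in>A. \<forall>y\<in>A. le\<^sub>A x y \<longleftrightarrow> le\<^sub>B (f x) (f y)"
    using assms by (auto simp: order_iso_betw_def)
  have "le\<^sub>B x y \<longleftrightarrow> le\<^sub>A (inv_into A f x) (inv_into A f y)" if "x \<in> B" "y \<in> B" for x y
    using le that f bij_betw_inv_into_right[OF f] bij_betwE[OF bij_betw_inv_into[OF f]] by metis
  then show ?thesis using bij_betw_inv_into[OF f] by (simp add: order_iso_betw_def)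
qed

lemma order_automorphism_fixed_if_comparable:
  fixes X :: "'a :: order"
  assumes "finite F" and \<Phi>: "order_iso_betw \<Phi> F (\<le>) F (\<le>)" and "X \<in> F"
    and "\<Phi> X \<le> X \<or> X \<le> \<Phi> X"
  shows "\<Phi> X = X"
proof -
  define down where "down Y = {Z \<in> F. Z \<le> Y}" for Y
  have bij: "bij_betw \<Phi> F F" and le: "\<forall>Y\<in>F. \<forall>Z\<in>F. Y \<le> Z \<longleftrightarrow> \<Phi> Y \<le> \<Phi> Z"
    using \<Phi> by (auto simp: order_iso_betw_def)
  have "\<Phi> ` down X = down (\<Phi> X)"
  proof
    show "\<Phi> ` down X \<subseteq> down (\<Phi> X)"
      using bij le \<open>X \<in> F\<close> unfolding down_def bij_betw_def by auto
    show "down (\<Phi> X) \<subseteq> \<Phi> ` down X"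
    proof
      fix Z assume "Z \<in> down (\<Phi> X)"
      then have "Z \<in> \<Phi> ` F" "Z \<le> \<Phi> X" using bij by (auto simp: down_def bij_betw_def)
      then obtain Y where "Y \<in> F" "Z = \<Phi> Y" "\<Phi> Y \<le> \<Phi> X" by blast
      then show "Z \<in> \<Phi> ` down X" using le \<open>X \<in> F\<close> by (auto simp: down_def)
    qed
  qed
  moreover have "inj_on \<Phi> (down X)"
    using bij by (auto simp: bij_betw_def down_def intro: inj_on_subset)
  ultimately have card_eq: "card (down (\<Phi> X)) = card (down X)" by (metis card_image)
  have "Y' \<le> Y" if "Y \<le> Y'" "Y' \<in> F" "card (down Y) = card (down Y')" for Y Y'
  proof -
    have "down Y \<subseteq> down Y'" using \<open>Y \<le> Y'\<close> by (auto simp: down_def)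
    moreover have "finite (down Y')" using \<open>finite F\<close> by (simp add: down_def)
    ultimately have "down Y = down Y'" using that(3) by (simp add: card_subset_eq)
    then show "Y' \<le> Y" using \<open>Y' \<in> F\<close> by (auto simp: down_def)
  qed
  moreover have "\<Phi> X \<in> F" using bij_betwE[OF bij] \<open>X \<in> F\<close> by blast
  ultimately show ?thesis
    using assms(4) card_eq \<open>X \<in> F\<close> by (auto intro: order.antisym)
qed

lemma order_automorphism_restrict_downset:
  fixes M :: "'a :: order"
  assumes \<Phi>: "order_iso_betw \<Phi> F (\<le>) F (\<le>)" and "M \<in> F" and "\<Phi> M = M"
  shows "order_iso_betw \<Phi> {Y \<in> F. Y \<le> M} (\<le>) {Y \<in> F. Y \<le> M} (\<le>)"
proof -
  have bij: "bij_betw \<Phi> F F" and le: "\<forall>Y\<in>F. \<forall>Z\<in>F. Y \<le> Z \<longleftrightarrow> \<Phi> Y \<le> \<Phi> Z"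
    using \<Phi> by (auto simp: order_iso_betw_def)
  have "\<Phi> ` {Y \<in> F. Y \<le> M} = {Y \<in> F. Y \<le> M}"
  proof
    show "\<Phi> ` {Y \<in> F. Y \<le> M} \<subseteq> {Y \<in> F. Y \<le> M}"
      using le assms(2,3) bij_betwE[OF bij] by fastforce
    show "{Y \<in> F. Y \<le> M} \<subseteq> \<Phi> ` {Y \<in> F. Y \<le> M}"
    proof
      fix Z assume "Z \<in> {Y \<in> F. Y \<le> M}"
      then have "Z \<in> \<Phi> ` F" "Z \<le> \<Phi> M" using bij assms(3) by (auto simp: bij_betw_def)
      then obtain Y where "Y \<in> F" "Z = \<Phi> Y" "\<Phi> Y \<le> \<Phi> M" by blast
      then show "Z \<in> \<Phi> ` {Y \<in> F. Y \<le> M}" using le assms(2) by auto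
    qed
  qed
  moreover have "inj_on \<Phi> {Y \<in> F. Y \<le> M}"
    using bij by (auto simp: bij_betw_def intro: inj_on_subset)
  ultimately show ?thesis using le by (auto simp: order_iso_betw_def bij_betw_def)
qed

lemma order_automorphism_le_iff_if_fixed:
  assumes "order_iso_betw \<Phi> F (\<le>) F (\<le>)" and "X \<in> F" "Y \<in> F" and "\<Phi> Y = Y"
  shows "Y \<le> \<Phi> X \<longleftrightarrow> Y \<le> X"
  using assms by (auto simp: order_iso_betw_def)

section \<open>Biclosed sets of pairs\<close>

definition pairs_between :: "nat \<Rightarrow> nat \<Rightarrow> (nat \<times> nat) set" where
  "pairs_between a b = {(x, y). a \<le> x \<and> x < y \<and> y \<le> b}"

definition biclosed :: "(nat \<times> nat) set \<Rightarrow> bool" where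
  "biclosed X \<longleftrightarrow>
     (\<forall>x y z. (x, y) \<in> X \<longrightarrow> (y, z) \<in> X \<longrightarrow> (x, z) \<in> X) \<and>
     (\<forall>x y z. (x, z) \<in> X \<longrightarrow> x < y \<longrightarrow> y < z \<longrightarrow> (x, y) \<in> X \<or> (y, z) \<in> X)"

definition biclosed_sets :: "nat \<Rightarrow> nat \<Rightarrow> (nat \<times> nat) set set" where
  "biclosed_sets a b = {X. X \<subseteq> pairs_between a b \<and> biclosed X}"

lemma finite_pairs_between: "finite (pairs_between a b)"
  by (rule finite_subset[of _ "{a..b} \<times> {a..b}"]) (auto simp: pairs_between_def)

lemma finite_biclosed_sets: "finite (biclosed_sets a b)"
  by (rule finite_subset[of _ "Pow (pairs_between a b)"])
    (auto simp: biclosed_sets_def finite_pairs_between)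

lemma pairs_between_in_biclosed_sets: "pairs_between a b \<in> biclosed_sets a b"
  by (auto simp: biclosed_sets_def biclosed_def pairs_between_def)

lemma adjacent_pair_in_biclosed_sets: "a \<le> i \<Longrightarrow> i < b \<Longrightarrow> {(i, Suc i)} \<in> biclosed_sets a b"
  by (auto simp: biclosed_sets_def biclosed_def pairs_between_def)

lemma Int_pairs_between_in_biclosed_sets:
  assumes "X \<in> biclosed_sets a b"
  shows "X \<inter> pairs_between a' b' \<in> biclosed_sets a' b'"
proof -
  have "biclosed X" using assms by (simp add: biclosed_sets_def)
  then have "biclosed (X \<inter> pairs_between a' b')"
    unfolding biclosed_def pairs_between_def by (auto 4 3)
  then show ?thesis by (simp add: biclosed_sets_def)
qed

lemma biclosed_sets_subinterval:
  "a \<le> a' \<Longrightarrow> b' \<le> b \<Longrightarrow>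
    biclosed_sets a' b' = {Y \<in> biclosed_sets a b. Y \<subseteq> pairs_between a' b'}"
  unfolding biclosed_sets_def pairs_between_def by auto

lemma pairs_between_subset_if_adjacent:
  assumes "biclosed X" and "\<And>i. a \<le> i \<Longrightarrow> i < b \<Longrightarrow> (i, Suc i) \<in> X"
  shows "pairs_between a b \<subseteq> X"
proof -
  have "(x, y) \<in> X" if "a \<le> x" "x < y" "y \<le> b" for x y
    using that
  proof (induction y)
    case (Suc y)
    show ?case
    proof (cases "x = y")
      case False
      with Suc have "(x, y) \<in> X" "(y, Suc y) \<in> X" using assms(2) by auto
      with \<open>biclosed X\<close> show ?thesis unfolding biclosed_def by blast
    qed (use Suc assms(2) in auto)
  qed simp
  then show ?thesis unfolding pairs_between_def by auto
qed

section \<open>Rigidity of the inclusion order on biclosed sets\<close>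

lemma biclosed_automorphism_restrict:
  assumes \<Phi>: "order_iso_betw \<Phi> (biclosed_sets a b) (\<subseteq>) (biclosed_sets a b) (\<subseteq>)"
    and fixed: "\<And>i. a \<le> i \<Longrightarrow> i < b \<Longrightarrow> \<Phi> {(i, Suc i)} = {(i, Suc i)}"
    and "a \<le> a'" "b' \<le> b"
  shows "order_iso_betw \<Phi> (biclosed_sets a' b') (\<subseteq>) (biclosed_sets a' b') (\<subseteq>)"
proof -
  let ?M = "pairs_between a' b'"
  have M: "?M \<in> biclosed_sets a b"
    using pairs_between_in_biclosed_sets biclosed_sets_subinterval[OF assms(3,4)] by blast
  have "?M \<subseteq> \<Phi> ?M"
  proof (rule pairs_between_subset_if_adjacent)
    show "biclosed (\<Phi> ?M)"
      using M \<Phi> by (auto simp: order_iso_betw_def biclosed_sets_def dest: bij_betwE)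
    fix i assume "a' \<le> i" "i < b'"
    then have "{(i, Suc i)} \<in> biclosed_sets a b" "{(i, Suc i)} \<subseteq> ?M"
      using assms(3,4) adjacent_pair_in_biclosed_sets by (auto simp: pairs_between_def)
    then have "\<Phi> {(i, Suc i)} \<subseteq> \<Phi> ?M" using \<Phi> M by (auto simp: order_iso_betw_def)
    then show "(i, Suc i) \<in> \<Phi> ?M" using fixed \<open>a' \<le> i\<close> \<open>i < b'\<close> assms(3,4) by auto
  qed
  then have "\<Phi> ?M = ?M"
    using order_automorphism_fixed_if_comparable[OF finite_biclosed_sets \<Phi> M] by blast
  from order_automorphism_restrict_downset[OF \<Phi> M this] show ?thesis
    unfolding biclosed_sets_subinterval[OF assms(3,4)] .
qed

lemma biclosed_automorphism_agrees_on_subinterval: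
  assumes \<Phi>: "order_iso_betw \<Phi> (biclosed_sets a b) (\<subseteq>) (biclosed_sets a b) (\<subseteq>)"
    and "a \<le> a'" "b' \<le> b" and id: "\<And>Y. Y \<in> biclosed_sets a' b' \<Longrightarrow> \<Phi> Y = Y"
    and X: "X \<in> biclosed_sets a b"
  shows "\<Phi> X \<inter> pairs_between a' b' = X \<inter> pairs_between a' b'"
proof -
  let ?M = "pairs_between a' b'"
  have sub: "biclosed_sets a' b' \<subseteq> biclosed_sets a b"
    using biclosed_sets_subinterval[OF assms(2,3)] by blast
  have \<Phi>X: "\<Phi> X \<in> biclosed_sets a b" using \<Phi> X by (auto simp: order_iso_betw_def dest: bij_betwE)
  have "Y \<subseteq> \<Phi> X \<longleftrightarrow> Y \<subseteq> X" if "Y \<in> biclosed_sets a' b'" for Y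
    using order_automorphism_le_iff_if_fixed[OF \<Phi> X] that sub id by blast
  from this[OF Int_pairs_between_in_biclosed_sets[OF X]]
    this[OF Int_pairs_between_in_biclosed_sets[OF \<Phi>X]]
  show ?thesis by blast
qed

theorem biclosed_automorphism_eq_id:
  assumes "order_iso_betw \<Phi> (biclosed_sets a b) (\<subseteq>) (biclosed_sets a b) (\<subseteq>)"
    and "\<And>i. a \<le> i \<Longrightarrow> i < b \<Longrightarrow> \<Phi> {(i, Suc i)} = {(i, Suc i)}"
    and "X \<in> biclosed_sets a b"
  shows "\<Phi> X = X"
  using assms
proof (induction "b - a" arbitrary: a b \<Phi> X rule: less_induct)
  case less
  note \<Phi> = less.prems(1) and fixed = less.prems(2) and X = less.prems(3)
  have \<Phi>X: "\<Phi> X \<in> biclosed_sets a b" using \<Phi> X by (auto simp: order_iso_betw_def dest: bij_betwE)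
  have "\<Phi> X - {(a, b)} = X - {(a, b)}"
  proof (cases "b \<le> Suc a")
    case True
    then have "pairs_between a b \<subseteq> {(a, b)}" by (auto simp: pairs_between_def)
    then show ?thesis using \<Phi>X X by (auto simp: biclosed_sets_def)
  next
    case False
    have agree: "\<Phi> X \<inter> pairs_between a' b' = X \<inter> pairs_between a' b'"
      if "a \<le> a'" "b' \<le> b" "b' - a' < b - a" for a' b'
    proof (rule biclosed_automorphism_agrees_on_subinterval[OF \<Phi> that(1,2) _ X])
      fix Y assume "Y \<in> biclosed_sets a' b'"
      with less.hyps[OF that(3) biclosed_automorphism_restrict[OF \<Phi> fixed that(1,2)]] fixed that(1,2)
      show "\<Phi> Y = Y" by auto
    qed
    have "pairs_between a b - {(a, b)} \<subseteq> pairs_between a (b - 1) \<union> pairs_between (Suc a) b"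
      by (auto simp: pairs_between_def)
    moreover have "\<Phi> X \<subseteq> pairs_between a b" "X \<subseteq> pairs_between a b"
      using \<Phi>X X by (auto simp: biclosed_sets_def)
    moreover have "\<Phi> X \<inter> pairs_between a (b - 1) = X \<inter> pairs_between a (b - 1)"
      "\<Phi> X \<inter> pairs_between (Suc a) b = X \<inter> pairs_between (Suc a) b"
      using agree False by auto
    ultimately show ?thesis by blast
  qed
  then have "\<Phi> X \<subseteq> X \<or> X \<subseteq> \<Phi> X" by blast
  then show ?case using order_automorphism_fixed_if_comparable[OF finite_biclosed_sets \<Phi> X] by blast
qed

section \<open>Inversion sets\<close>

definition inversions :: "nat \<Rightarrow> (nat \<Rightarrow> nat) \<Rightarrow> (nat \<times> nat) set" where
  "inversions n w = {(x, y). 1 \<le> x \<and> x < y \<and> y \<le> Suc n \<and> w y < w x}"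

lemma sref_permutes: "i \<in> {1..n} \<Longrightarrow> sref i permutes {1..Suc n}"
  unfolding sref_def by (rule permutes_swap_id) auto

lemma wprod_permutes: "set is \<subseteq> {1..n} \<Longrightarrow> wprod is permutes {1..Suc n}"
  by (induction "is") (auto simp only: wprod.simps permutes_id set_simps insert_subset
      intro: permutes_compose sref_permutes)

lemma wprod_append: "wprod (xs @ ys) = wprod xs \<circ> wprod ys"
  by (induction xs) (auto simp: comp_assoc)

lemma inversions_subset_pairs_between: "inversions n w \<subseteq> pairs_between 1 (Suc n)"
  by (auto simp: inversions_def pairs_between_def)

lemma finite_inversions: "finite (inversions n w)"
  using inversions_subset_pairs_between finite_pairs_between by (rule finite_subset)

lemma inversions_id: "inversions n id = {}"
  by (auto simp: inversions_def)

lemma inversions_sref: "i \<in> {1..n} \<Longrightarrow> inversions n (sref i) = {(i, Suc i)}"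
  by (auto simp: inversions_def sref_def transpose_def split: if_splits)

lemma inversions_in_biclosed_sets:
  assumes "w permutes {1..Suc n}"
  shows "inversions n w \<in> biclosed_sets 1 (Suc n)"
proof -
  have "w x \<noteq> w y" if "x < y" for x y
    using permutes_inj[OF assms] that by (metis injD less_irrefl)
  then have "biclosed (inversions n w)"
    unfolding biclosed_def inversions_def by (auto 0 4 dest: less_trans)
  then show ?thesis using inversions_subset_pairs_between by (simp add: biclosed_sets_def)
qed

lemma card_permutes_less:
  assumes w: "w permutes {1..Suc n}" and x: "x \<in> {1..Suc n}"
  shows "card {y \<in> {1..Suc n}. w y < w x} = w x - 1"
proof -
  let ?S = "{1..Suc n}"
  have image: "w ` {y \<in> ?S. w y < w x} = {v \<in> ?S. v < w x}"
  proof (intro equalityI subsetI)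
    fix v assume v: "v \<in> {v \<in> ?S. v < w x}"
    then have "inv w v \<in> ?S" using permutes_in_image[OF permutes_inv[OF w], of v] by simp
    moreover have "w (inv w v) = v" by (rule permutes_inverses(1)[OF w])
    ultimately show "v \<in> w ` {y \<in> ?S. w y < w x}" using v by (intro image_eqI[of v w "inv w v"]) auto
  next
    fix v assume "v \<in> w ` {y \<in> ?S. w y < w x}"
    then obtain y where "y \<in> ?S" "w y < w x" "v = w y" by blast
    then show "v \<in> {v \<in> ?S. v < w x}" using permutes_in_image[OF w, of y] by simp
  qed
  have "card {y \<in> ?S. w y < w x} = card {v \<in> ?S. v < w x}"
    using card_image[OF permutes_inj_on[OF w], of "{y \<in> ?S. w y < w x}"] image by simp
  also have "{v \<in> ?S. v < w x} = {1..<w x}"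
    using permutes_in_image[OF w, of x] x by auto
  finally show ?thesis by simp
qed

lemma inversions_inj:
  assumes w: "w permutes {1..Suc n}" and u: "u permutes {1..Suc n}"
    and eq: "inversions n w = inversions n u"
  shows "w = u"
proof
  fix x
  let ?S = "{1..Suc n}"
  show "w x = u x"
  proof (cases "x \<in> ?S")
    case False
    then show ?thesis using permutes_not_in[OF w] permutes_not_in[OF u] by simp
  next
    case True
    \<comment> \<open>\<open>v x - 1\<close> counts the positions with a smaller value, and these are read off the
      inversion set.\<close>
    have below: "{y \<in> ?S. v y < v x} =
        {y \<in> ?S. y < x \<and> (y, x) \<notin> inversions n v \<or> x < y \<and> (x, y) \<in> inversions n v}"
      if v: "v permutes ?S" for v
    proof -
      have "v y < v x \<longleftrightarrow>
          y < x \<and> (y, x) \<notin> inversions n v \<or> x < y \<and> (x, y) \<in> inversions n v" if "y \<in> ?S" for y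
      proof (cases "y = x")
        case False
        then have "v y \<noteq> v x" using permutes_inj[OF v] by (metis injD)
        then show ?thesis using that True False by (auto simp: inversions_def)
      qed simp
      then show ?thesis by auto
    qed
    have "w x - 1 = u x - 1"
      using card_permutes_less[OF w True] card_permutes_less[OF u True] below[OF w] below[OF u] eq
      by simp
    moreover have "w x \<ge> 1" "u x \<ge> 1"
      using permutes_in_image[OF w, of x] permutes_in_image[OF u, of x] True by auto
    ultimately show ?thesis by simp
  qed
qed

lemma sref_less_sref_iff:
  "u \<noteq> v \<Longrightarrow> sref i u < sref i v \<longleftrightarrow> (u < v \<longleftrightarrow> {u, v} \<noteq> {i, Suc i})"
  unfolding sref_def transpose_def by (auto simp: doubleton_eq_iff)

lemma inversions_sref_comp:
  assumes w: "w permutes {1..Suc n}" and "i \<in> {1..n}" and x: "w x = i" and y: "w y = Suc i"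
  shows "q \<in> inversions n (sref i \<circ> w) \<longleftrightarrow> (q \<in> inversions n w \<longleftrightarrow> q \<noteq> (min x y, max x y))"
proof -
  let ?S = "{1..Suc n}"
  have "x \<in> ?S" "y \<in> ?S" "x \<noteq> y"
    using permutes_not_in[OF w, of x] permutes_not_in[OF w, of y] x y \<open>i \<in> {1..n}\<close> by fastforce+
  obtain a b where q: "q = (a, b)" by fastforce
  show ?thesis
  proof (cases "1 \<le> a \<and> a < b \<and> b \<le> Suc n")
    case True
    have "{w b, w a} = {i, Suc i} \<longleftrightarrow> w ` {a, b} = w ` {x, y}"
      using x y by (auto simp: insert_commute)
    also have "\<dots> \<longleftrightarrow> {a, b} = {x, y}"
      using permutes_inj[OF w] by (rule inj_image_eq_iff)
    also have "\<dots> \<longleftrightarrow> (a, b) = (min x y, max x y)"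
      using True by (auto simp: doubleton_eq_iff min_def max_def)
    moreover have "w b \<noteq> w a" using True permutes_inj[OF w] by (metis injD less_irrefl)
    ultimately show ?thesis
      using True sref_less_sref_iff[of "w b" "w a" i] by (auto simp: q inversions_def)
  next
    case False
    moreover have "min x y \<ge> 1" "min x y < max x y" "max x y \<le> Suc n"
      using \<open>x \<in> ?S\<close> \<open>y \<in> ?S\<close> \<open>x \<noteq> y\<close> by auto
    ultimately show ?thesis by (auto simp: q inversions_def)
  qed
qed

lemma inversions_sref_comp_cases:
  assumes w: "w permutes {1..Suc n}" and i: "i \<in> {1..n}"
  obtains "inversions n (sref i \<circ> w) \<subset> inversions n w"
  | "inversions n w \<subseteq> inversions n (sref i \<circ> w)"
    "card (inversions n (sref i \<circ> w)) = Suc (card (inversions n w))"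
proof -
  obtain x y where xy: "w x = i" "w y = Suc i" using permutes_surj[OF w] by (metis surjD)
  define p where "p = (min x y, max x y)"
  have new: "inversions n (sref i \<circ> w) =
      (if p \<in> inversions n w then inversions n w - {p} else insert p (inversions n w))"
    using inversions_sref_comp[OF w i xy] by (auto simp: p_def)
  show thesis
  proof (cases "p \<in> inversions n w")
    case True
    with new have "inversions n (sref i \<circ> w) \<subset> inversions n w" by auto
    then show thesis by (rule that(1))
  next
    case False
    with new finite_inversions[of n w] show thesis by (intro that(2)) auto
  qed
qed

lemma card_inversions_wprod_comp:
  assumes w: "w permutes {1..Suc n}" and "set is \<subseteq> {1..n}"
  shows "card (inversions n (wprod is \<circ> w)) \<le> card (inversions n w) + length is \<and>
    (card (inversions n (wprod is \<circ> w)) = card (inversions n w) + length is \<longrightarrow>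
     inversions n w \<subseteq> inversions n (wprod is \<circ> w))"
  using \<open>set is \<subseteq> {1..n}\<close>
proof (induction "is")
  case (Cons i js)
  let ?u = "wprod js \<circ> w" and ?c = "\<lambda>v. card (inversions n v)"
  have u: "?u permutes {1..Suc n}"
    using Cons.prems wprod_permutes[of js n] w by (auto intro: permutes_compose)
  have "set js \<subseteq> {1..n}" using Cons.prems by simp
  note IH = Cons.IH[OF this, THEN conjunct1] Cons.IH[OF this, THEN conjunct2, rule_format]
  have eq: "wprod (i # js) \<circ> w = sref i \<circ> ?u" by (simp add: comp_assoc)
  from Cons.prems have "i \<in> {1..n}" by simp
  from inversions_sref_comp_cases[OF u this]
  have step: "?c (sref i \<circ> ?u) \<le> ?c w + Suc (length js) \<and>
    (?c (sref i \<circ> ?u) = ?c w + Suc (length js) \<longrightarrow> inversions n w \<subseteq> inversions n (sref i \<circ> ?u))"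
  proof cases
    case 1
    then have "?c (sref i \<circ> ?u) < ?c ?u" by (simp add: psubset_card_mono finite_inversions)
    then show ?thesis using IH(1) by (intro conjI impI) linarith+
  next
    case 2
    show ?thesis
    proof (intro conjI impI)
      show "?c (sref i \<circ> ?u) \<le> ?c w + Suc (length js)" using 2(2) IH(1) by linarith
      assume "?c (sref i \<circ> ?u) = ?c w + Suc (length js)"
      then have "?c ?u = ?c w + length js" using 2(2) by linarith
      then show "inversions n w \<subseteq> inversions n (sref i \<circ> ?u)" using IH(2) 2(1) by blast
    qed
  qed
  show ?case unfolding eq length_Cons by (rule step)
qed simp

lemma biclosed_split_non_inversion:
  assumes X: "X \<in> biclosed_sets 1 (Suc n)" and sub: "inversions n w \<subseteq> X"
    and xy: "(x, y) \<in> X - inversions n w" and z: "z \<in> {1..Suc n}" "w x < w z" "w z < w y"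
  shows "(x, z) \<in> X - inversions n w \<or> (z, y) \<in> X - inversions n w"
proof -
  have trans: "(a, b) \<in> X \<Longrightarrow> (b, c) \<in> X \<Longrightarrow> (a, c) \<in> X"
    and cotrans: "(a, c) \<in> X \<Longrightarrow> a < b \<Longrightarrow> b < c \<Longrightarrow> (a, b) \<in> X \<or> (b, c) \<in> X" for a b c
    using X by (auto simp: biclosed_sets_def biclosed_def)
  have "1 \<le> x" "x < y" "y \<le> Suc n" using xy X by (auto simp: biclosed_sets_def pairs_between_def)
  moreover have "z \<noteq> x" "z \<noteq> y" using z by auto
  ultimately consider "z < x" | "x < z" "z < y" | "y < z" by linarith
  then show ?thesis
  proof cases
    case 1
    then have "(z, x) \<in> X" using sub z \<open>x < y\<close> \<open>y \<le> Suc n\<close> by (auto simp: inversions_def)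
    then show ?thesis using trans xy z by (auto simp: inversions_def)
  next
    case 2
    then show ?thesis using cotrans xy z by (auto simp: inversions_def)
  next
    case 3
    then have "(y, z) \<in> X" using sub z \<open>1 \<le> x\<close> \<open>x < y\<close> by (auto simp: inversions_def)
    then show ?thesis using trans xy z by (auto simp: inversions_def)
  qed
qed

lemma ex_adjacent_non_inversion:
  assumes w: "w permutes {1..Suc n}" and X: "X \<in> biclosed_sets 1 (Suc n)"
    and sub: "inversions n w \<subseteq> X" and ne: "inversions n w \<noteq> X"
  shows "\<exists>x y. (x, y) \<in> X - inversions n w \<and> w y = Suc (w x)"
proof -
  \<comment> \<open>A non-inversion in \<open>X\<close> with minimal value gap has gap 1: a value strictly in between
    would, by biclosedness, give a non-inversion in \<open>X\<close> with a smaller gap.\<close>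
  let ?gap = "\<lambda>(x, y). w y - w x"
  obtain q0 where "q0 \<in> X - inversions n w" using sub ne by blast
  then obtain q where q: "q \<in> X - inversions n w"
    and least: "\<And>q'. q' \<in> X - inversions n w \<Longrightarrow> ?gap q \<le> ?gap q'"
    using ex_has_least_nat[of "\<lambda>q. q \<in> X - inversions n w" q0 ?gap] by blast
  obtain x y where q_eq: "q = (x, y)" by fastforce
  note xy = q[unfolded q_eq] and least = least[unfolded q_eq prod.case]
  have "1 \<le> x" "x < y" "y \<le> Suc n"
    using xy X by (auto simp: biclosed_sets_def pairs_between_def)
  then have "\<not> w y < w x" using xy by (simp add: inversions_def)
  moreover have "w x \<noteq> w y" using permutes_inj[OF w] \<open>x < y\<close> by (metis injD less_irrefl)
  ultimately have "w x < w y" by simp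
  have no_value_between: "\<not> (w x < v \<and> v < w y)" for v
  proof
    assume v: "w x < v \<and> v < w y"
    have "w y \<le> Suc n" using permutes_in_image[OF w, of y] \<open>x < y\<close> \<open>1 \<le> x\<close> \<open>y \<le> Suc n\<close> by simp
    with v have "v \<in> {1..Suc n}" by simp
    then have z: "inv w v \<in> {1..Suc n}" "w (inv w v) = v"
      using permutes_in_image[OF permutes_inv[OF w], of v] permutes_inverses(1)[OF w] by auto
    from biclosed_split_non_inversion[OF X sub xy z(1), unfolded z(2)] v
    consider "(x, inv w v) \<in> X - inversions n w" | "(inv w v, y) \<in> X - inversions n w" by blast
    then show False
    proof cases
      case 1
      from least[OF 1] v show False by (simp add: z(2)) linarith
    next
      case 2
      from least[OF 2] v show False by (simp add: z(2)) linarith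
    qed
  qed
  from \<open>w x < w y\<close> no_value_between[of "Suc (w x)"] have "w y = Suc (w x)" by linarith
  then show ?thesis using xy by blast
qed

lemma ex_word_inversions_eq:
  assumes X: "X \<in> biclosed_sets 1 (Suc n)"
    and "w permutes {1..Suc n}" and "inversions n w \<subseteq> X"
  shows "\<exists>is. set is \<subseteq> {1..n} \<and> length is = card X - card (inversions n w) \<and>
    inversions n (wprod is \<circ> w) = X"
  using assms(2,3)
proof (induction "card X - card (inversions n w)" arbitrary: w)
  case 0
  have "finite X" using X finite_pairs_between by (auto simp: biclosed_sets_def intro: finite_subset)
  with 0 have "inversions n w = X" by (simp add: card_seteq)
  moreover have "length [] = card X - card (inversions n w)" using 0(1) by simp
  ultimately show ?case by (intro exI[of _ "[]"]) simp
next
  case (Suc k)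
  from Suc.hyps(2) have "inversions n w \<noteq> X" by auto
  then obtain x y where xy: "(x, y) \<in> X - inversions n w" "w y = Suc (w x)"
    using ex_adjacent_non_inversion[OF Suc.prems(1) X Suc.prems(2)] by blast
  have "x < y" using xy X by (auto simp: biclosed_sets_def pairs_between_def)
  have "x \<in> {1..Suc n}" "y \<in> {1..Suc n}"
    using xy(1) X \<open>x < y\<close> by (auto simp: biclosed_sets_def pairs_between_def)
  then have i: "w x \<in> {1..n}"
    using xy(2) permutes_in_image[OF Suc.prems(1), of x] permutes_in_image[OF Suc.prems(1), of y]
    by simp
  let ?w' = "sref (w x) \<circ> w"
  have w': "?w' permutes {1..Suc n}" using Suc.prems(1) sref_permutes[OF i] by (rule permutes_compose)
  have grow: "inversions n ?w' = insert (x, y) (inversions n w)"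
  proof (rule set_eqI)
    fix q
    have "(min x y, max x y) = (x, y)" using \<open>x < y\<close> by simp
    with inversions_sref_comp[OF Suc.prems(1) i refl xy(2), of q] xy(1)
    show "q \<in> inversions n ?w' \<longleftrightarrow> q \<in> insert (x, y) (inversions n w)" by auto
  qed
  then have "card (inversions n ?w') = Suc (card (inversions n w))"
    using xy(1) finite_inversions by simp
  then have "k = card X - card (inversions n ?w')" using Suc.hyps(2) by simp
  moreover have "inversions n ?w' \<subseteq> X" using grow xy(1) Suc.prems(2) by simp
  ultimately obtain js where js: "set js \<subseteq> {1..n}" "length js = k" "inversions n (wprod js \<circ> ?w') = X"
    using Suc.hyps(1)[of ?w'] w' by blast
  have eq: "wprod (js @ [w x]) \<circ> w = wprod js \<circ> ?w'" by (simp add: wprod_append comp_assoc)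
  show ?case
  proof (intro exI conjI)
    show "set (js @ [w x]) \<subseteq> {1..n}" using js(1) i by simp
    show "length (js @ [w x]) = card X - card (inversions n w)" using js(2) Suc.hyps(2) by simp
    show "inversions n (wprod (js @ [w x]) \<circ> w) = X" unfolding eq by (rule js(3))
  qed
qed

section \<open>The left weak order\<close>

lemma coxeter_length_eq_card_inversions:
  assumes w: "w permutes {1..Suc n}"
  shows "coxeter_length n w = card (inversions n w)"
  unfolding coxeter_length_def
proof (rule Least_equality)
  obtain "is" where word: "set is \<subseteq> {1..n}" "length is = card (inversions n w)"
    "inversions n (wprod is) = inversions n w"
    using ex_word_inversions_eq[OF inversions_in_biclosed_sets[OF w] permutes_id]
    by (auto simp: inversions_id)
  then have "wprod is = w" using inversions_inj[OF wprod_permutes[OF word(1)] w] by blast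
  then show "\<exists>is. set is \<subseteq> {1..n} \<and> length is = card (inversions n w) \<and> wprod is = w"
    using word by blast
next
  fix k assume "\<exists>is. set is \<subseteq> {1..n} \<and> length is = k \<and> wprod is = w"
  then obtain "is" where "set is \<subseteq> {1..n}" "length is = k" "wprod is = w" by blast
  then show "card (inversions n w) \<le> k"
    using card_inversions_wprod_comp[OF permutes_id, of "is" n] by (simp add: inversions_id)
qed

lemma left_weak_iff_inversions_subset:
  assumes w: "w permutes {1..Suc n}" and w': "w' permutes {1..Suc n}"
  shows "left_weak n w w' \<longleftrightarrow> inversions n w \<subseteq> inversions n w'"
proof
  assume "left_weak n w w'"
  then obtain "is" where "set is \<subseteq> {1..n}" "w' = wprod is \<circ> w"
    "coxeter_length n w' = coxeter_length n w + length is"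
    unfolding left_weak_def by blast
  with card_inversions_wprod_comp[OF w] show "inversions n w \<subseteq> inversions n w'"
    using coxeter_length_eq_card_inversions[OF w] coxeter_length_eq_card_inversions[OF w'] by simp
next
  assume sub: "inversions n w \<subseteq> inversions n w'"
  obtain "is" where word: "set is \<subseteq> {1..n}"
    "length is = card (inversions n w') - card (inversions n w)"
    "inversions n (wprod is \<circ> w) = inversions n w'"
    using ex_word_inversions_eq[OF inversions_in_biclosed_sets[OF w'] w sub] by blast
  have "w' = wprod is \<circ> w"
    using inversions_inj[OF permutes_compose[OF w wprod_permutes[OF word(1)]] w' word(3)] by simp
  moreover have "card (inversions n w) \<le> card (inversions n w')"
    using sub finite_inversions by (rule card_mono[rotated])
  ultimately show "left_weak n w w'"
    unfolding left_weak_def using word(1,2) coxeter_length_eq_card_inversions[OF w]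
      coxeter_length_eq_card_inversions[OF w'] by auto
qed

lemma order_iso_betw_inversions:
  "order_iso_betw (inversions n) (Sym n) (left_weak n) (biclosed_sets 1 (Suc n)) (\<subseteq>)"
proof -
  have "inj_on (inversions n) (Sym n)"
    by (rule inj_onI) (auto simp: Sym_def intro: inversions_inj)
  moreover have "inversions n ` Sym n = biclosed_sets 1 (Suc n)"
  proof (intro equalityI subsetI)
    fix X assume X: "X \<in> biclosed_sets 1 (Suc n)"
    then obtain "is" where "set is \<subseteq> {1..n}" "inversions n (wprod is) = X"
      using ex_word_inversions_eq[OF X permutes_id] by (auto simp: inversions_id)
    then show "X \<in> inversions n ` Sym n" using wprod_permutes by (force simp: Sym_def)
  qed (use inversions_in_biclosed_sets in \<open>auto simp: Sym_def\<close>)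
  ultimately show ?thesis
    by (auto simp: order_iso_betw_def bij_betw_def Sym_def left_weak_iff_inversions_subset)
qed

theorem weak_order_automorphism_eq_id:
  assumes \<sigma>: "order_iso_betw \<sigma> (Sym n) (left_weak n) (Sym n) (left_weak n)"
    and fixed: "\<And>i. i \<in> {1..n} \<Longrightarrow> \<sigma> (sref i) = sref i"
    and w: "w \<in> Sym n"
  shows "\<sigma> w = w"
proof -
  let ?\<iota> = "inversions n" and ?B = "biclosed_sets 1 (Suc n)"
  define \<Phi> where "\<Phi> = ?\<iota> \<circ> (\<sigma> \<circ> inv_into (Sym n) ?\<iota>)"
  have \<iota>: "order_iso_betw ?\<iota> (Sym n) (left_weak n) ?B (\<subseteq>)" by (rule order_iso_betw_inversions)
  then have inj: "inj_on ?\<iota> (Sym n)" by (simp add: order_iso_betw_def bij_betw_def)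
  have \<Phi>: "order_iso_betw \<Phi> ?B (\<subseteq>) ?B (\<subseteq>)"
    unfolding \<Phi>_def
    by (intro order_iso_betw_comp[OF _ \<iota>] order_iso_betw_comp[OF order_iso_betw_inv_into[OF \<iota>] \<sigma>])
  have \<Phi>_\<iota>: "\<Phi> (?\<iota> u) = ?\<iota> (\<sigma> u)" if "u \<in> Sym n" for u
    using inj that by (simp add: \<Phi>_def)
  have "\<Phi> {(i, Suc i)} = {(i, Suc i)}" if "1 \<le> i" "i < Suc n" for i
    using \<Phi>_\<iota>[of "sref i"] that fixed inversions_sref sref_permutes by (simp add: Sym_def)
  moreover have "?\<iota> w \<in> ?B"
    using w unfolding Sym_def by (blast intro: inversions_in_biclosed_sets)
  ultimately have "\<Phi> (?\<iota> w) = ?\<iota> w" by (rule biclosed_automorphism_eq_id[OF \<Phi>])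
  moreover have "\<sigma> w \<in> Sym n" using \<sigma> w by (auto simp: order_iso_betw_def dest: bij_betwE)
  ultimately show "\<sigma> w = w" using \<Phi>_\<iota>[OF w] inj w by (metis inj_onD)
qed

theorem proposition5p1:
  fixes n :: nat and P :: "'b set" and le :: "'b \<Rightarrow> 'b \<Rightarrow> bool"
    and \<rho> \<rho>' :: "(nat \<Rightarrow> nat) \<Rightarrow> 'b"
  assumes "partial_order_on' P le"
    and "weak_order_iso n P le \<rho>"
    and "weak_order_iso n P le \<rho>'"
    and "\<forall>i\<in>{1..n}. \<rho> (sref i) = \<rho>' (sref i)"
  shows "\<forall>w\<in>Sym n. \<rho> w = \<rho>' w"
proof
  fix w assume w: "w \<in> Sym n"
  have \<rho>: "order_iso_betw \<rho> (Sym n) (left_weak n) P le"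
    and \<rho>': "order_iso_betw \<rho>' (Sym n) (left_weak n) P le"
    using assms(2,3) by (simp_all add: weak_order_iso_def order_iso_betw_def)
  let ?\<sigma> = "inv_into (Sym n) \<rho>' \<circ> \<rho>"
  have \<rho>'_\<sigma>: "\<rho>' (?\<sigma> u) = \<rho> u" if "u \<in> Sym n" for u
    using \<rho> \<rho>' that by (auto simp: order_iso_betw_def bij_betw_def f_inv_into_f)
  have "?\<sigma> w = w"
  proof (rule weak_order_automorphism_eq_id[OF _ _ w])
    show "order_iso_betw ?\<sigma> (Sym n) (left_weak n) (Sym n) (left_weak n)"
      using \<rho> order_iso_betw_inv_into[OF \<rho>'] by (rule order_iso_betw_comp)
    fix i assume "i \<in> {1..n}"
    with assms(4) sref_permutes \<rho>' show "?\<sigma> (sref i) = sref i"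
      by (auto simp: Sym_def order_iso_betw_def bij_betw_def inv_into_f_f)
  qed
  then show "\<rho> w = \<rho>' w" using \<rho>'_\<sigma>[OF w] by simp
qed

end
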